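(* Let $K$ be any one of the prime knots $6_3$, $8_7$, $8_8$, $8_{10}$, $8_{16}$ (Rolfsen knot table notation). Then the knot quandle $Q(K)$ is not bi-orderable.
   Context: A quandle is a non-empty set $Q$ with a binary operation $*$ such that: (Q1) $x*x=x$ for all $x\in Q$; (Q2) for each $x,y\in Q$ there is a unique $z\in Q$ with $x=z*y$ (write $z=x*^{-1}y$); (Q3) $(x*y)*z=(x*z)*(y*z)$ for all $x,y,z\in Q$. The knot quandle $Q(K)$ of an oriented knot $K$ (Joyce, Matveev) is the quandle presented as follows: fix an oriented diagram $D$ of $K$; generators are the arcs of $D$; at each crossing with over-arc $y$, incoming under-arc $x$ and outgoing under-arc $z$, impose the relation $z=x*y$ if the crossing is positive and $z=x*^{-1}y$ if it is negative. A quandle $Q$ is bi-orderable if there is a strict linear order $<$ on $Q$ such that for all $x,y,z\in Q$, $x<y$ implies both $z*x<z*y$ (left-orderability) and $x*z<y*z$ (right-orderability). *)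

theory Defs
  imports Main
begin

definition quandle :: "'a set \<Rightarrow> ('a \<Rightarrow> 'a \<Rightarrow> 'a) \<Rightarrow> bool" where
  "quandle Q f \<longleftrightarrow> Q \<noteq> {} \<and>
     (\<forall>x\<in>Q. \<forall>y\<in>Q. f x y \<in> Q) \<and>
     (\<forall>x\<in>Q. f x x = x) \<and>
     (\<forall>x\<in>Q. \<forall>y\<in>Q. \<exists>!z. z \<in> Q \<and> f z y = x) \<and>
     (\<forall>x\<in>Q. \<forall>y\<in>Q. \<forall>z\<in>Q. f (f x y) z = f (f x z) (f y z))"

definition bi_orderable :: "'a set \<Rightarrow> ('a \<Rightarrow> 'a \<Rightarrow> 'a) \<Rightarrow> bool" where
  "bi_orderable Q f \<longleftrightarrow> (\<exists>less :: 'a \<Rightarrow> 'a \<Rightarrow> bool.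
     (\<forall>x\<in>Q. \<not> less x x) \<and>
     (\<forall>x\<in>Q. \<forall>y\<in>Q. \<forall>z\<in>Q. less x y \<longrightarrow> less y z \<longrightarrow> less x z) \<and>
     (\<forall>x\<in>Q. \<forall>y\<in>Q. x \<noteq> y \<longrightarrow> less x y \<or> less y x) \<and>
     (\<forall>x\<in>Q. \<forall>y\<in>Q. \<forall>z\<in>Q. less x y \<longrightarrow>
         less (f z x) (f z y) \<and> less (f x z) (f y z)))"

text \<open>Quandle terms over generators (natural numbers), in the signature
  (*, *^-1): Op x y = x * y, Inv x y = x *^-1 y.\<close>
datatype qterm = Gen nat | Op qterm qterm | Inv qterm qterm

fun gens :: "qterm \<Rightarrow> nat set" where
  "gens (Gen a) = {a}"
| "gens (Op s t) = gens s \<union> gens t"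
| "gens (Inv s t) = gens s \<union> gens t"

inductive qeq :: "(qterm \<times> qterm) set \<Rightarrow> qterm \<Rightarrow> qterm \<Rightarrow> bool" for R where
  qrefl: "qeq R t t"
| qsym: "qeq R s t \<Longrightarrow> qeq R t s"
| qtrans: "qeq R s t \<Longrightarrow> qeq R t u \<Longrightarrow> qeq R s u"
| qrel: "(s, t) \<in> R \<Longrightarrow> qeq R s t"
| qcong_op: "qeq R s s' \<Longrightarrow> qeq R t t' \<Longrightarrow> qeq R (Op s t) (Op s' t')"
| qcong_inv: "qeq R s s' \<Longrightarrow> qeq R t t' \<Longrightarrow> qeq R (Inv s t) (Inv s' t')"
| qidem: "qeq R (Op x x) x"
| qinv1: "qeq R (Op (Inv x y) y) x"
| qinv2: "qeq R (Inv (Op x y) y) x"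
| qdist: "qeq R (Op (Op x y) z) (Op (Op x z) (Op y z))"

definition pres_carrier :: "nat \<Rightarrow> (qterm \<times> qterm) set \<Rightarrow> qterm set set" where
  "pres_carrier n R = {t. gens t \<subseteq> {..<n}} // {(s, t). qeq R s t}"

definition pres_op :: "(qterm \<times> qterm) set \<Rightarrow> qterm set \<Rightarrow> qterm set \<Rightarrow> qterm set" where
  "pres_op R A B = {u. qeq R (Op (SOME a. a \<in> A) (SOME b. b \<in> B)) u}"

text \<open>An oriented knot diagram: (n, cs) where the arcs are 0, ..., n-1 and each
  crossing is (positive, y, x, z): sign (True = positive), over-arc y,
  incoming under-arc x, outgoing under-arc z.\<close>
type_synonym diagram = "nat \<times> (bool \<times> nat \<times> nat \<times> nat) list"

definition diagram_rels :: "diagram \<Rightarrow> (qterm \<times> qterm) set" where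
  "diagram_rels D =
     {(Gen z, if s then Op (Gen x) (Gen y) else Inv (Gen x) (Gen y)) | s y x z.
        (s, y, x, z) \<in> set (snd D)}"

definition knot_quandle_carrier :: "diagram \<Rightarrow> qterm set set" where
  "knot_quandle_carrier D = pres_carrier (fst D) (diagram_rels D)"

definition knot_quandle_op :: "diagram \<Rightarrow> qterm set \<Rightarrow> qterm set \<Rightarrow> qterm set" where
  "knot_quandle_op D = pres_op (diagram_rels D)"

text \<open>Each diagram is the closure of the indicated braid word (sigma_i^{+-1}),
  strands oriented downwards.  Crossing data were generated mechanically from the
  braid word; the Alexander polynomials of these presentations agree with those of
  the named knots.\<close>

(* 6_3 : closure of s1 s1 s2^-1 s1 s2^-1 s2^-1 *)
definition knot_6_3 :: diagram where
  "knot_6_3 = (6, [(False, 0, 1, 3), (False, 3, 0, 4), (True, 2, 3, 5),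
                   (False, 4, 2, 0), (True, 5, 4, 1), (True, 1, 5, 2)])"

(* 8_7 : closure of s1^4 s2^-1 s1 s2^-2 *)
definition knot_8_7 :: diagram where
  "knot_8_7 = (8, [(False, 0, 1, 3), (False, 3, 0, 4), (False, 4, 3, 5), (False, 5, 4, 6),
                   (True, 2, 5, 7), (False, 6, 2, 0), (True, 7, 6, 1), (True, 1, 7, 2)])"

(* 8_8 : closure of the 4-braid s1^3 s2 s1^-1 s3^-1 s2 s3^-2 (9-crossing diagram) *)
definition knot_8_8 :: diagram where
  "knot_8_8 = (9, [(False, 0, 1, 4), (False, 4, 0, 5), (False, 5, 4, 6), (False, 5, 2, 0),
                   (True, 0, 6, 7), (True, 3, 5, 8), (False, 7, 3, 1), (True, 8, 7, 2),
                   (True, 2, 8, 3)])"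

(* 8_10 : closure of s1^3 s2^-1 s1^2 s2^-2 *)
definition knot_8_10 :: diagram where
  "knot_8_10 = (8, [(False, 0, 1, 3), (False, 3, 0, 4), (False, 4, 3, 5), (True, 2, 4, 6),
                    (False, 5, 2, 7), (False, 7, 5, 0), (True, 6, 7, 1), (True, 1, 6, 2)])"

(* 8_16 : closure of s1^2 s2^-1 s1^2 s2^-1 s1 s2^-1 *)
definition knot_8_16 :: diagram where
  "knot_8_16 = (8, [(False, 0, 1, 3), (False, 3, 0, 4), (True, 2, 3, 5), (False, 4, 2, 6),
                    (False, 6, 4, 7), (True, 5, 6, 1), (False, 7, 5, 0), (True, 1, 7, 2)])"

end

theory Submission
  imports Defs "HOL-Number_Theory.Cong"
begin

text \<open>In a bi-ordered quandle, idempotence and monotonicity force \<open>x * y\<close> to lie strictly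
  between \<open>x\<close> and \<open>y\<close> whenever \<open>x \<noteq> y\<close>, and every left translation \<open>z * -\<close> is
  strictly increasing. Recording the position of each arc of a diagram in the order by an
  integer rank, each crossing relation becomes an order constraint between integers; for the five diagrams a handful
  of these constraints already force arcs 0 and 1 to be equal. A Fox colouring, i.e. a
  homomorphism to a dihedral quandle, shows that they are different elements of the
  knot quandle.\<close>

text \<open>The quandle axioms hold exactly in the dihedral quandle \<open>x * y = 2y - x\<close> on the
  integers; only the relations are imposed modulo \<open>m\<close>.\<close>

fun dihedral_eval :: "(nat \<Rightarrow> int) \<Rightarrow> qterm \<Rightarrow> int" where
  "dihedral_eval c (Gen i) = c i"
| "dihedral_eval c (Op s t) = 2 * dihedral_eval c t - dihedral_eval c s"
| "dihedral_eval c (Inv s t) = 2 * dihedral_eval c t - dihedral_eval c s"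

lemma dihedral_eval_cong:
  assumes "qeq R s t"
    and "\<And>a b. (a, b) \<in> R \<Longrightarrow> [dihedral_eval c a = dihedral_eval c b] (mod m)"
  shows "[dihedral_eval c s = dihedral_eval c t] (mod m)"
  using assms(1)
proof (induction rule: qeq.induct)
  case (qrel s t)
  then show ?case by (rule assms(2))
next
  case (qsym s t)
  from qsym.IH show ?case by (rule cong_sym)
next
  case (qtrans s t u)
  from qtrans.IH show ?case by (rule cong_trans)
qed (simp_all add: cong_diff cong_mult algebra_simps)

definition fox_colouring :: "int \<Rightarrow> diagram \<Rightarrow> (nat \<Rightarrow> int) \<Rightarrow> bool" where
  "fox_colouring m D c \<longleftrightarrow> (\<forall>(s, y, x, z) \<in> set (snd D). [c x + c z = 2 * c y] (mod m))"

lemma fox_colouring_separates_arcs: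
  assumes colouring: "fox_colouring m D c" and "\<not> [c i = c j] (mod m)"
  shows "\<not> qeq (diagram_rels D) (Gen i) (Gen j)"
proof
  assume "qeq (diagram_rels D) (Gen i) (Gen j)"
  then have "[dihedral_eval c (Gen i) = dihedral_eval c (Gen j)] (mod m)"
  proof (rule dihedral_eval_cong)
    fix a b assume "(a, b) \<in> diagram_rels D"
    then obtain s y x z where crossing: "(s, y, x, z) \<in> set (snd D)"
      and ab: "a = Gen z" "b = (if s then Op (Gen x) (Gen y) else Inv (Gen x) (Gen y))"
      unfolding diagram_rels_def by blast
    have "[c x + c z = 2 * c y] (mod m)"
      using colouring crossing unfolding fox_colouring_def by fast
    then have "[c x + c z - c x = 2 * c y - c x] (mod m)"
      by (rule cong_diff) simp
    then show "[dihedral_eval c a = dihedral_eval c b] (mod m)"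
      using ab by simp
  qed
  with assms(2) show False by simp
qed

definition pres_class :: "(qterm \<times> qterm) set \<Rightarrow> qterm \<Rightarrow> qterm set" where
  "pres_class R a = {t. qeq R a t}"

lemma pres_class_in_carrier: "gens a \<subseteq> {..<n} \<Longrightarrow> pres_class R a \<in> pres_carrier n R"
  unfolding pres_carrier_def quotient_def pres_class_def by auto

lemma pres_carrier_classE:
  assumes "A \<in> pres_carrier n R"
  obtains a where "A = pres_class R a"
  using assms unfolding pres_carrier_def quotient_def pres_class_def by auto

lemma pres_class_eq_iff: "pres_class R a = pres_class R b \<longleftrightarrow> qeq R a b"
  unfolding pres_class_def by (auto intro: qeq.intros)

lemma pres_op_class: "pres_op R (pres_class R a) (pres_class R b) = pres_class R (Op a b)"
proof -
  have "qeq R a (SOME a'. a' \<in> pres_class R a)" "qeq R b (SOME b'. b' \<in> pres_class R b)"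
    by (auto simp: pres_class_def intro: someI qeq.qrefl)
  then have "qeq R (Op a b) (Op (SOME a'. a' \<in> pres_class R a) (SOME b'. b' \<in> pres_class R b))"
    by (rule qeq.qcong_op)
  then show ?thesis
    unfolding pres_op_def pres_class_def by (auto intro: qeq.qtrans qeq.qsym)
qed

lemma pres_op_idem: "A \<in> pres_carrier n R \<Longrightarrow> pres_op R A A = A"
  by (elim pres_carrier_classE) (simp add: pres_op_class pres_class_eq_iff qeq.qidem)

lemma finite_strict_linear_order_rank:
  fixes less :: "'a \<Rightarrow> 'a \<Rightarrow> bool"
  assumes "finite S"
    and irrefl: "\<And>x. x \<in> S \<Longrightarrow> \<not> less x x"
    and trans: "\<And>x y z. x \<in> S \<Longrightarrow> y \<in> S \<Longrightarrow> z \<in> S \<Longrightarrow> less x y \<Longrightarrow> less y z \<Longrightarrow> less x z"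
    and total: "\<And>x y. x \<in> S \<Longrightarrow> y \<in> S \<Longrightarrow> x \<noteq> y \<Longrightarrow> less x y \<or> less y x"
  shows "\<exists>r :: 'a \<Rightarrow> int. inj_on r S \<and> (\<forall>x\<in>S. \<forall>y\<in>S. r x < r y \<longleftrightarrow> less x y)"
proof -
  define r where "r x = int (card {z \<in> S. less z x})" for x
  have strict: "r x < r y" if "x \<in> S" "y \<in> S" "less x y" for x y
  proof -
    have "{z \<in> S. less z x} \<subseteq> {z \<in> S. less z y}"
      using trans[OF _ that(1,2) _ that(3)] by blast
    moreover have "x \<in> {z \<in> S. less z y} - {z \<in> S. less z x}"
      using that irrefl by blast
    ultimately have "{z \<in> S. less z x} \<subset> {z \<in> S. less z y}"
      by blast
    then show ?thesis
      unfolding r_def using \<open>finite S\<close> by (simp add: psubset_card_mono)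
  qed
  have "inj_on r S"
  proof (rule inj_onI)
    fix x y assume "x \<in> S" "y \<in> S" "r x = r y"
    then show "x = y" using strict[of x y] strict[of y x] total[of x y] by auto
  qed
  moreover have "r x < r y \<longleftrightarrow> less x y" if "x \<in> S" "y \<in> S" for x y
    using that strict[of x y] strict[of y x] total[of x y] by (cases "x = y") auto
  ultimately show ?thesis by blast
qed

lemma bi_orderable_finite_rank:
  assumes "bi_orderable Q f" and "finite S" and "S \<subseteq> Q"
  obtains \<rho> :: "'a \<Rightarrow> int" where "inj_on \<rho> S"
    and "\<And>x y z. x \<in> S \<Longrightarrow> y \<in> S \<Longrightarrow> z \<in> S \<Longrightarrow> f z x \<in> S \<Longrightarrow> f z y \<in> S \<Longrightarrow>
      \<rho> x < \<rho> y \<Longrightarrow> \<rho> (f z x) < \<rho> (f z y)"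
    and "\<And>x y z. x \<in> S \<Longrightarrow> y \<in> S \<Longrightarrow> z \<in> S \<Longrightarrow> f x z \<in> S \<Longrightarrow> f y z \<in> S \<Longrightarrow>
      \<rho> x < \<rho> y \<Longrightarrow> \<rho> (f x z) < \<rho> (f y z)"
proof -
  obtain less where
    irrefl: "\<forall>x\<in>Q. \<not> less x x" and
    trans: "\<forall>x\<in>Q. \<forall>y\<in>Q. \<forall>z\<in>Q. less x y \<longrightarrow> less y z \<longrightarrow> less x z" and
    total: "\<forall>x\<in>Q. \<forall>y\<in>Q. x \<noteq> y \<longrightarrow> less x y \<or> less y x" and
    mono: "\<forall>x\<in>Q. \<forall>y\<in>Q. \<forall>z\<in>Q. less x y \<longrightarrow> less (f z x) (f z y) \<and> less (f x z) (f y z)"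
    using \<open>bi_orderable Q f\<close> unfolding bi_orderable_def by blast
  have "\<exists>\<rho> :: 'a \<Rightarrow> int. inj_on \<rho> S \<and> (\<forall>x\<in>S. \<forall>y\<in>S. \<rho> x < \<rho> y \<longleftrightarrow> less x y)"
  proof (rule finite_strict_linear_order_rank)
    show "\<not> less x x" if "x \<in> S" for x
      using irrefl that \<open>S \<subseteq> Q\<close> by blast
    show "less x z" if "x \<in> S" "y \<in> S" "z \<in> S" "less x y" "less y z" for x y z
      using trans that \<open>S \<subseteq> Q\<close> by blast
    show "less x y \<or> less y x" if "x \<in> S" "y \<in> S" "x \<noteq> y" for x y
      using total that \<open>S \<subseteq> Q\<close> by blast
  qed fact
  then obtain \<rho> :: "'a \<Rightarrow> int" where inj: "inj_on \<rho> S"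
    and \<rho>: "\<forall>x\<in>S. \<forall>y\<in>S. \<rho> x < \<rho> y \<longleftrightarrow> less x y"
    by blast
  have \<rho>_less: "\<rho> x < \<rho> y \<longleftrightarrow> less x y" if "x \<in> S" "y \<in> S" for x y
    using \<rho> that by blast
  have "less (f z x) (f z y) \<and> less (f x z) (f y z)"
    if "x \<in> S" "y \<in> S" "z \<in> S" "\<rho> x < \<rho> y" for x y z
    using mono that(1-3) \<open>S \<subseteq> Q\<close> \<rho>_less[OF that(1,2)] that(4) by blast
  then show ?thesis
    using that[OF inj] \<rho>_less by simp
qed

definition lies_between :: "int \<Rightarrow> int \<Rightarrow> int \<Rightarrow> bool" where
  "lies_between z x y \<longleftrightarrow> x = y \<and> z = x \<or> x < z \<and> z < y \<or> y < z \<and> z < x"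

lemma bi_orderable_rank:
  assumes "bi_orderable Q f" and idem: "\<And>x. x \<in> Q \<Longrightarrow> f x x = x"
    and "finite S" and "S \<subseteq> Q"
  obtains \<rho> :: "'a \<Rightarrow> int" where "inj_on \<rho> S"
    and "\<And>x y. x \<in> S \<Longrightarrow> y \<in> S \<Longrightarrow> f x y \<in> S \<Longrightarrow> lies_between (\<rho> (f x y)) (\<rho> x) (\<rho> y)"
    and "\<And>x y z. x \<in> S \<Longrightarrow> y \<in> S \<Longrightarrow> z \<in> S \<Longrightarrow> f z x \<in> S \<Longrightarrow> f z y \<in> S \<Longrightarrow>
      \<rho> x < \<rho> y \<Longrightarrow> \<rho> (f z x) < \<rho> (f z y)"
proof -
  obtain \<rho> :: "'a \<Rightarrow> int" where inj: "inj_on \<rho> S"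
    and left: "\<And>x y z. x \<in> S \<Longrightarrow> y \<in> S \<Longrightarrow> z \<in> S \<Longrightarrow> f z x \<in> S \<Longrightarrow> f z y \<in> S \<Longrightarrow>
      \<rho> x < \<rho> y \<Longrightarrow> \<rho> (f z x) < \<rho> (f z y)"
    and right: "\<And>x y z. x \<in> S \<Longrightarrow> y \<in> S \<Longrightarrow> z \<in> S \<Longrightarrow> f x z \<in> S \<Longrightarrow> f y z \<in> S \<Longrightarrow>
      \<rho> x < \<rho> y \<Longrightarrow> \<rho> (f x z) < \<rho> (f y z)"
    using bi_orderable_finite_rank[OF assms(1,3,4)] by blast
  have "lies_between (\<rho> (f x y)) (\<rho> x) (\<rho> y)" if xy: "x \<in> S" "y \<in> S" "f x y \<in> S" for x y
  proof -
    have xx: "f x x = x" and yy: "f y y = y" using idem xy \<open>S \<subseteq> Q\<close> by auto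
    consider "\<rho> x < \<rho> y" | "x = y" | "\<rho> y < \<rho> x"
      using inj_onD[OF inj _ xy(1,2)] by fastforce
    then show ?thesis
    proof cases
      case 1
      \<comment> \<open>\<open>x = x * x < x * y < y * y = y\<close>\<close>
      then show ?thesis
        using left[of x y x] right[of x y y] xy xx yy unfolding lies_between_def by simp
    next
      case 2
      then show ?thesis using xx unfolding lies_between_def by simp
    next
      case 3
      \<comment> \<open>\<open>y = y * y < x * y < x * x = x\<close>\<close>
      then show ?thesis
        using left[of y x x] right[of y x y] xy xx yy unfolding lies_between_def by simp
    qed
  qed
  with inj left show ?thesis using that by blast
qed

text \<open>A triple \<open>(p, q, t)\<close> records the relation \<open>p * q = t\<close> between arcs; at a negative
  crossing, \<open>z = x *\<^sup>-\<^sup>1 y\<close> is recorded in the equivalent form \<open>z * y = x\<close>.\<close>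

definition crossing_relations :: "diagram \<Rightarrow> (nat \<times> nat \<times> nat) set" where
  "crossing_relations D = (\<lambda>(s, y, x, z). if s then (x, y, z) else (z, y, x)) ` set (snd D)"

definition wf_diagram :: "diagram \<Rightarrow> bool" where
  "wf_diagram D \<longleftrightarrow> (\<forall>(s, y, x, z) \<in> set (snd D). y < fst D \<and> x < fst D \<and> z < fst D)"

definition bi_ordered_ranking :: "(nat \<times> nat \<times> nat) set \<Rightarrow> (nat \<Rightarrow> int) \<Rightarrow> bool" where
  "bi_ordered_ranking T r \<longleftrightarrow>
     (\<forall>(p, q, t) \<in> T. lies_between (r t) (r p) (r q)) \<and>
     (\<forall>(p, q, t) \<in> T. \<forall>(p', q', t') \<in> T. p = p' \<longrightarrow> r q < r q' \<longrightarrow> r t < r t')"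

lemma bi_ordered_ranking_between:
  "bi_ordered_ranking T r \<Longrightarrow> (p, q, t) \<in> T \<Longrightarrow> lies_between (r t) (r p) (r q)"
  unfolding bi_ordered_ranking_def by fastforce

lemma bi_ordered_ranking_left_mono:
  "bi_ordered_ranking T r \<Longrightarrow> (p, q, t) \<in> T \<Longrightarrow> (p, q', t') \<in> T \<Longrightarrow> r q < r q' \<longrightarrow> r t < r t'"
  unfolding bi_ordered_ranking_def by fastforce

lemma knot_quandle_crossing_relation:
  assumes "(p, q, t) \<in> crossing_relations D"
  shows "knot_quandle_op D (pres_class (diagram_rels D) (Gen p)) (pres_class (diagram_rels D) (Gen q))
    = pres_class (diagram_rels D) (Gen t)"
proof -
  let ?R = "diagram_rels D"
  obtain s y x z where crossing: "(s, y, x, z) \<in> set (snd D)"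
    and pqt: "(p, q, t) = (if s then (x, y, z) else (z, y, x))"
    using assms unfolding crossing_relations_def by auto
  have "qeq ?R (Op (Gen p) (Gen q)) (Gen t)"
  proof (cases s)
    case True
    then have "(Gen z, Op (Gen x) (Gen y)) \<in> ?R"
      using crossing unfolding diagram_rels_def by force
    then show ?thesis using True pqt by (auto intro: qeq.qsym qeq.qrel)
  next
    case False
    then have "qeq ?R (Gen z) (Inv (Gen x) (Gen y))"
      using crossing unfolding diagram_rels_def by (force intro: qeq.qrel)
    then have "qeq ?R (Op (Gen z) (Gen y)) (Op (Inv (Gen x) (Gen y)) (Gen y))"
      by (rule qeq.qcong_op) (rule qeq.qrefl)
    then show ?thesis using False pqt by (auto intro: qeq.qtrans qeq.qinv1)
  qed
  then show ?thesis
    by (simp add: knot_quandle_op_def pres_op_class pres_class_eq_iff)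
qed

lemma bi_orderable_knot_quandle_ranking:
  assumes "bi_orderable (knot_quandle_carrier D) (knot_quandle_op D)" and "wf_diagram D"
  obtains r where "bi_ordered_ranking (crossing_relations D) r"
    and "\<And>i j. i < fst D \<Longrightarrow> j < fst D \<Longrightarrow> r i = r j \<Longrightarrow> qeq (diagram_rels D) (Gen i) (Gen j)"
proof -
  define a where "a i = pres_class (diagram_rels D) (Gen i)" for i
  let ?S = "a ` {..<fst D}"
  have idem: "knot_quandle_op D A A = A" if "A \<in> knot_quandle_carrier D" for A
    using that unfolding knot_quandle_op_def knot_quandle_carrier_def by (rule pres_op_idem)
  have fin: "finite ?S" by simp
  have sub: "?S \<subseteq> knot_quandle_carrier D"
    unfolding a_def knot_quandle_carrier_def by (auto intro: pres_class_in_carrier)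
  obtain \<rho> :: "qterm set \<Rightarrow> int" where inj: "inj_on \<rho> ?S"
    and between: "\<And>x y. x \<in> ?S \<Longrightarrow> y \<in> ?S \<Longrightarrow> knot_quandle_op D x y \<in> ?S \<Longrightarrow>
      lies_between (\<rho> (knot_quandle_op D x y)) (\<rho> x) (\<rho> y)"
    and left_mono: "\<And>x y z. x \<in> ?S \<Longrightarrow> y \<in> ?S \<Longrightarrow> z \<in> ?S \<Longrightarrow>
      knot_quandle_op D z x \<in> ?S \<Longrightarrow> knot_quandle_op D z y \<in> ?S \<Longrightarrow>
      \<rho> x < \<rho> y \<Longrightarrow> \<rho> (knot_quandle_op D z x) < \<rho> (knot_quandle_op D z y)"
    using bi_orderable_rank[OF assms(1) idem fin sub] by blast
  have crossing: "p < fst D \<and> q < fst D \<and> t < fst D \<and> knot_quandle_op D (a p) (a q) = a t"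
    if "(p, q, t) \<in> crossing_relations D" for p q t
    using that \<open>wf_diagram D\<close> knot_quandle_crossing_relation[OF that]
    unfolding a_def crossing_relations_def wf_diagram_def by (auto split: if_splits)
  define r where "r i = \<rho> (a i)" for i
  have "lies_between (r t) (r p) (r q)" if "(p, q, t) \<in> crossing_relations D" for p q t
    using crossing[OF that] between[of "a p" "a q"] unfolding r_def by auto
  moreover have "r t < r t'"
    if "(p, q, t) \<in> crossing_relations D" "(p, q', t') \<in> crossing_relations D" "r q < r q'"
    for p q t q' t'
    using crossing[OF that(1)] crossing[OF that(2)] left_mono[of "a q" "a q'" "a p"] that(3)
    unfolding r_def by auto
  ultimately have "bi_ordered_ranking (crossing_relations D) r"
    unfolding bi_ordered_ranking_def by blast
  moreover have "qeq (diagram_rels D) (Gen i) (Gen j)"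
    if "i < fst D" "j < fst D" "r i = r j" for i j
  proof -
    have "a i = a j" using inj_onD[OF inj, of "a i" "a j"] that unfolding r_def by simp
    then show ?thesis unfolding a_def by (simp add: pres_class_eq_iff)
  qed
  ultimately show ?thesis using that by blast
qed

lemma not_bi_orderable_knot_quandle:
  assumes "wf_diagram D" and "i < fst D" and "j < fst D"
    and collapse: "\<And>r. bi_ordered_ranking (crossing_relations D) r \<Longrightarrow> r i = r j"
    and "fox_colouring m D c" and "\<not> [c i = c j] (mod m)"
  shows "\<not> bi_orderable (knot_quandle_carrier D) (knot_quandle_op D)"
proof
  assume "bi_orderable (knot_quandle_carrier D) (knot_quandle_op D)"
  then obtain r where "bi_ordered_ranking (crossing_relations D) r"
    and "\<And>i j. i < fst D \<Longrightarrow> j < fst D \<Longrightarrow> r i = r j \<Longrightarrow> qeq (diagram_rels D) (Gen i) (Gen j)"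
    using bi_orderable_knot_quandle_ranking \<open>wf_diagram D\<close> by blast
  then have "qeq (diagram_rels D) (Gen i) (Gen j)"
    using collapse assms(2,3) by blast
  then show False
    using fox_colouring_separates_arcs assms(5,6) by blast
qed

text \<open>For each diagram, the constraints listed form a minimal subsystem that is infeasible
  when arcs 0 and 1 have different ranks; the colouring is a Fox colouring modulo a prime
  divisor of the determinant of the knot.\<close>

lemma not_bi_orderable_knot_6_3:
  "\<not> bi_orderable (knot_quandle_carrier knot_6_3) (knot_quandle_op knot_6_3)"
proof (rule not_bi_orderable_knot_quandle[where i = 0 and j = 1 and m = 13
      and c = "nth [0, 1, 9, 12, 11, 6]"])
  fix r assume r: "bi_ordered_ranking (crossing_relations knot_6_3) r"
  have "lies_between (r 2) (r 0) (r 4)" "lies_between (r 1) (r 4) (r 5)"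
    "lies_between (r 2) (r 5) (r 1)"
    by (rule bi_ordered_ranking_between[OF r]; simp add: knot_6_3_def crossing_relations_def)+
  moreover have "r 0 < r 2 \<longrightarrow> r 1 < r 5" "r 2 < r 0 \<longrightarrow> r 5 < r 1"
    by (rule bi_ordered_ranking_left_mono[OF r, where p = 3];
        simp add: knot_6_3_def crossing_relations_def)+
  ultimately show "r 0 = r 1"
    by (smt (z3) lies_between_def)
qed (simp_all add: knot_6_3_def wf_diagram_def fox_colouring_def cong_def)

lemma not_bi_orderable_knot_8_7:
  "\<not> bi_orderable (knot_quandle_carrier knot_8_7) (knot_quandle_op knot_8_7)"
proof (rule not_bi_orderable_knot_quandle[where i = 0 and j = 1 and m = 23
      and c = "nth [0, 1, 15, 22, 21, 20, 19, 10]"])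
  fix r assume r: "bi_ordered_ranking (crossing_relations knot_8_7) r"
  have "lies_between (r 1) (r 3) (r 0)" "lies_between (r 3) (r 5) (r 4)"
    "lies_between (r 7) (r 5) (r 2)" "lies_between (r 2) (r 0) (r 6)"
    "lies_between (r 1) (r 6) (r 7)" "lies_between (r 2) (r 7) (r 1)"
    by (rule bi_ordered_ranking_between[OF r]; simp add: knot_8_7_def crossing_relations_def)+
  moreover have "r 5 < r 7 \<longrightarrow> r 4 < r 1" "r 7 < r 5 \<longrightarrow> r 1 < r 4"
    by (rule bi_ordered_ranking_left_mono[OF r, where p = 6];
        simp add: knot_8_7_def crossing_relations_def)+
  ultimately show "r 0 = r 1"
    by (smt (z3) lies_between_def)
qed (simp_all add: knot_8_7_def wf_diagram_def fox_colouring_def cong_def)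

lemma not_bi_orderable_knot_8_8:
  "\<not> bi_orderable (knot_quandle_carrier knot_8_8) (knot_quandle_op knot_8_8)"
proof (rule not_bi_orderable_knot_quandle[where i = 0 and j = 1 and m = 5
      and c = "nth [0, 1, 1, 0, 4, 3, 2, 3, 2]"])
  fix r assume r: "bi_ordered_ranking (crossing_relations knot_8_8) r"
  have "lies_between (r 1) (r 4) (r 0)" "lies_between (r 2) (r 0) (r 5)"
    "lies_between (r 8) (r 5) (r 3)" "lies_between (r 3) (r 1) (r 7)"
    "lies_between (r 3) (r 8) (r 2)"
    by (rule bi_ordered_ranking_between[OF r]; simp add: knot_8_8_def crossing_relations_def)+
  moreover have "r 4 < r 3 \<longrightarrow> r 0 < r 8" "r 3 < r 4 \<longrightarrow> r 8 < r 0"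
    by (rule bi_ordered_ranking_left_mono[OF r, where p = 5];
        simp add: knot_8_8_def crossing_relations_def)+
  moreover have "r 5 < r 0 \<longrightarrow> r 4 < r 7" "r 0 < r 5 \<longrightarrow> r 7 < r 4"
    by (rule bi_ordered_ranking_left_mono[OF r, where p = 6];
        simp add: knot_8_8_def crossing_relations_def)+
  ultimately show "r 0 = r 1"
    by (smt (z3) lies_between_def)
qed (simp_all add: knot_8_8_def wf_diagram_def fox_colouring_def cong_def)

lemma not_bi_orderable_knot_8_10:
  "\<not> bi_orderable (knot_quandle_carrier knot_8_10) (knot_quandle_op knot_8_10)"
proof (rule not_bi_orderable_knot_quandle[where i = 0 and j = 1 and m = 3
      and c = "nth [0, 1, 0, 2, 1, 0, 2, 0]"])
  fix r assume r: "bi_ordered_ranking (crossing_relations knot_8_10) r"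
  have "lies_between (r 1) (r 3) (r 0)" "lies_between (r 5) (r 0) (r 7)"
    "lies_between (r 1) (r 7) (r 6)" "lies_between (r 2) (r 6) (r 1)"
    by (rule bi_ordered_ranking_between[OF r]; simp add: knot_8_10_def crossing_relations_def)+
  moreover have "r 3 < r 2 \<longrightarrow> r 0 < r 6" "r 2 < r 3 \<longrightarrow> r 6 < r 0"
    by (rule bi_ordered_ranking_left_mono[OF r, where p = 4];
        simp add: knot_8_10_def crossing_relations_def)+
  moreover have "r 5 < r 6 \<longrightarrow> r 2 < r 1" "r 6 < r 5 \<longrightarrow> r 1 < r 2"
    by (rule bi_ordered_ranking_left_mono[OF r, where p = 7];
        simp add: knot_8_10_def crossing_relations_def)+
  ultimately show "r 0 = r 1"
    by (smt (z3) lies_between_def)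
qed (simp_all add: knot_8_10_def wf_diagram_def fox_colouring_def cong_def)

lemma not_bi_orderable_knot_8_16:
  "\<not> bi_orderable (knot_quandle_carrier knot_8_16) (knot_quandle_op knot_8_16)"
proof (rule not_bi_orderable_knot_quandle[where i = 0 and j = 1 and m = 5
      and c = "nth [0, 1, 2, 4, 3, 0, 4, 0]"])
  fix r assume r: "bi_ordered_ranking (crossing_relations knot_8_16) r"
  have "lies_between (r 2) (r 6) (r 4)" "lies_between (r 1) (r 6) (r 5)"
    "lies_between (r 5) (r 0) (r 7)" "lies_between (r 2) (r 7) (r 1)"
    by (rule bi_ordered_ranking_between[OF r]; simp add: knot_8_16_def crossing_relations_def)+
  moreover have "r 0 < r 2 \<longrightarrow> r 1 < r 5" "r 2 < r 0 \<longrightarrow> r 5 < r 1"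
    by (rule bi_ordered_ranking_left_mono[OF r, where p = 3];
        simp add: knot_8_16_def crossing_relations_def)+
  moreover have "r 6 < r 1 \<longrightarrow> r 4 < r 2" "r 1 < r 6 \<longrightarrow> r 2 < r 4"
    by (rule bi_ordered_ranking_left_mono[OF r, where p = 7];
        simp add: knot_8_16_def crossing_relations_def)+
  ultimately show "r 0 = r 1"
    by (smt (z3) lies_between_def)
qed (simp_all add: knot_8_16_def wf_diagram_def fox_colouring_def cong_def)

theorem mainTheorem1:
  shows "\<forall>D \<in> {knot_6_3, knot_8_7, knot_8_8, knot_8_10, knot_8_16}.
           \<not> bi_orderable (knot_quandle_carrier D) (knot_quandle_op D)"
  using not_bi_orderable_knot_6_3 not_bi_orderable_knot_8_7 not_bi_orderable_knot_8_8
    not_bi_orderable_knot_8_10 not_bi_orderable_knot_8_16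
  by blast

end
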